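(* In the setting below with $P=\mathfrak S$, the worst case setting and the absolute error criterion, assume $\lambda_1\le1$. Then $\{S_d\}$ is strongly polynomially tractable if and only if $\lambda\in\ell_\tau$ for some $\tau>0$ and either $\lambda_1<1$, or $1=\lambda_1>\lambda_2$ and $d-\#I_d\in O(1)$. Moreover, $\{S_d\}$ is polynomially tractable if and only if $\lambda\in\ell_\tau$ for some $\tau>0$ and either $\lambda_1<1$, or $\lambda_1=1$ and $d-\#I_d\in O(\ln d)$.
   Context: Setting: $S_1:H_1\to G_1$ is a compact linear operator between real Hilbert spaces ($H_1$ infinite-dimensional separable); $\lambda=(\lambda_m)_{m\in\mathbb N}$, $\lambda_1\ge\lambda_2\ge\dots\ge0$, are the eigenvalues of $S_1^\dagger S_1$. $S_d=S_1^{\otimes d}:H_1^{\otimes d}\to G_1^{\otimes d}$. For each $d$ fix $\emptyset\ne I_d=\{i_1<\dots<i_{a_d}\}\subset\{1,\dots,d\}$ ($I_1=\{1\}$), put $a_d=\#I_d$, $b_d=d-a_d$, and fix one type $P\in\{\mathfrak S,\mathfrak A\}$ for all $d$; the problem $\{S_d\}$ is the family of restrictions of $S_d$ to the $I_d$-symmetric subspace (if $P=\mathfrak S$) or $I_d$-antisymmetric subspace (if $P=\mathfrak A$) of $H_1^{\otimes d}$, i.e. the range of $\frac1{a_d!}\sum_{\pi}(\pm1)U_\pi$, the sum over permutations $\pi$ of $\{1,\dots,d\}$ fixing all points outside $I_d$, $U_\pi(f_1\otimes\cdots\otimes f_d)=f_{\pi(1)}\otimes\cdots\otimes f_{\pi(d)}$,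 sign $(-1)^{|\pi|}$ used for $\mathfrak A$. Let $\nabla_d=\{k\in\mathbb N^d:k_{i_1}\le\dots\le k_{i_{a_d}}\}$ for $P=\mathfrak S$ and with strict inequalities for $P=\mathfrak A$; $\lambda_{d,k}=\prod_{l=1}^d\lambda_{k_l}$; $\psi:\mathbb N\to\nabla_d$ a bijection with $\lambda_{d,\psi(1)}\ge\lambda_{d,\psi(2)}\ge\cdots$. These are exactly the eigenvalues of $S_d^\dagger S_d$ on the subspace, and the information complexity (absolute error) is $n(\epsilon,d)=\#\{k\in\nabla_d:\lambda_{d,k}>\epsilon^2\}$, the initial error $\epsilon^{\rm init}_d=\sqrt{\lambda_{d,\psi(1)}}$ (equal to $\lambda_1^{d/2}$ if $P=\mathfrak S$, and $\sqrt{\lambda_1^{b_d}\lambda_1\lambda_2\cdots\lambda_{a_d}}$ if $P=\mathfrak A$). Polynomially tractable: $\exists C,p>0,q\ge0$ with $n(\epsilon,d)\le C\epsilon^{-p}d^q$ for all $d\in\mathbb N,\epsilon\in(0,1]$; strongly polynomially tractable: this with $q=0$. Standing assumptions: $\lambda_2>0$ and $\epsilon_d^{\rm init}>0$ for all $d$. $\ell_\tau$: sequences with $\|\lambda\|_{\ell_\tau}^\tau=\sum_m\lambda_m^\tau<\infty$. *)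

theory Defs
  imports "HOL-Analysis.Analysis" "HOL-Library.Landau_Symbols"
begin

text \<open>Eigenvalue sequence lam is indexed from 1 (lam 0 is irrelevant).
  Multi-indices k in N^d are functions on {1..d} with values >= 1,
  extensional (k l = undefined outside {1..d}).\<close>

definition nabla_S :: "nat set \<Rightarrow> nat \<Rightarrow> (nat \<Rightarrow> nat) set" where
  "nabla_S I d = {k \<in> {1..d} \<rightarrow>\<^sub>E {1..}. \<forall>i\<in>I. \<forall>j\<in>I. i < j \<longrightarrow> k i \<le> k j}"

definition lam_prod :: "(nat \<Rightarrow> real) \<Rightarrow> nat \<Rightarrow> (nat \<Rightarrow> nat) \<Rightarrow> real" where
  "lam_prod lam d k = (\<Prod>l\<in>{1..d}. lam (k l))"

text \<open>Information complexity n(eps,d), absolute error, worst case, I_d-symmetric case.\<close>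
definition info_compl_S :: "(nat \<Rightarrow> real) \<Rightarrow> (nat \<Rightarrow> nat set) \<Rightarrow> real \<Rightarrow> nat \<Rightarrow> nat" where
  "info_compl_S lam I eps d = card {k \<in> nabla_S (I d) d. lam_prod lam d k > eps\<^sup>2}"

definition poly_tractable_S :: "(nat \<Rightarrow> real) \<Rightarrow> (nat \<Rightarrow> nat set) \<Rightarrow> bool" where
  "poly_tractable_S lam I \<longleftrightarrow> (\<exists>C p q::real. C > 0 \<and> p > 0 \<and> q \<ge> 0 \<and>
     (\<forall>d\<ge>1. \<forall>eps. 0 < eps \<and> eps \<le> 1 \<longrightarrow>
        real (info_compl_S lam I eps d) \<le> C * eps powr (-p) * real d powr q))"

definition strongly_poly_tractable_S :: "(nat \<Rightarrow> real) \<Rightarrow> (nat \<Rightarrow> nat set) \<Rightarrow> bool" where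
  "strongly_poly_tractable_S lam I \<longleftrightarrow> (\<exists>C p::real. C > 0 \<and> p > 0 \<and>
     (\<forall>d\<ge>1. \<forall>eps. 0 < eps \<and> eps \<le> 1 \<longrightarrow>
        real (info_compl_S lam I eps d) \<le> C * eps powr (-p)))"

definition in_ell :: "real \<Rightarrow> (nat \<Rightarrow> real) \<Rightarrow> bool" where
  "in_ell tau lam \<longleftrightarrow> summable (\<lambda>m. lam (Suc m) powr tau)"

end

theory Submission
  imports Defs
begin

text \<open>
  A multi-index whose values are bounded by M is determined by its values on a
  set J of free coordinates together with the number of symmetric coordinates (those in I d,
  where k is monotone) carrying each value m \<in> {2..M}.  Summing the weight
  \<Prod>l. lam (k l) powr tau over all such codes (a Markov-type count) gives, for every tau > 0,
    n(eps,d) \<le> (\<Prod>m\<in>{2..M}. \<Sum>n\<le>#J. (lam m powr tau)^n) * (\<Sum>m\<le>M. lam m powr tau)^(d-#J) * eps^(-2 tau),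
  with J = I d if lam 1 = 1 and J = {} otherwise.  If lam 1 < 1 we pick tau with
  \<Sum>m. lam m powr tau \<le> 1/2 and get n(eps,d) \<le> eps^(-2 tau).  If lam 1 = 1 > lam (L+1)
  we pick tau with tail \<Sum>m>L. lam m powr tau \<le> 1/2: the product is then at most
  (#I d + 1)^(L-1) * e, and the remaining factor is exponential only in d - #I d; bounded
  d - #I d (with L = 1) gives strong, and d - #I d = O(ln d) gives polynomial tractability.

  For d = 1, n(eps,1) \<ge> #{m. lam m > eps^2}, which forces lam \<in> l_p.
  If lam 1 = 1, putting the value 2 on j free coordinates yields (d - #I d choose j) indices
  of weight lam 2^j, forcing d - #I d = O(1) resp. O(ln d); and lam 1 = lam 2 = 1 yields
  d + 1 monotone indices of weight 1, excluding strong tractability.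
\<close>

lemma lam_antimono:
  fixes lam :: "nat \<Rightarrow> real"
  assumes noninc: "\<forall>m\<ge>1. lam (Suc m) \<le> lam m" and "1 \<le> m" "m \<le> n"
  shows "lam n \<le> lam m"
  using assms(3)
proof (induction n rule: dec_induct)
  case base then show ?case by simp
next
  case (step n) then show ?case using noninc assms(2) by (meson dual_order.trans le_trans)
qed

lemma lam_prod_le_factor:
  fixes lam :: "nat \<Rightarrow> real"
  assumes nonneg: "\<forall>m\<ge>1. lam m \<ge> 0" and le1: "\<forall>m\<ge>1. lam m \<le> 1"
    and k: "\<forall>l\<in>{1..d}. k l \<ge> 1" and l: "l \<in> {1..d}"
  shows "lam_prod lam d k \<le> lam (k l)"
proof -
  have "lam_prod lam d k = lam (k l) * (\<Prod>i\<in>{1..d} - {l}. lam (k i))"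
    unfolding lam_prod_def using l by (simp add: prod.remove)
  also have "\<dots> \<le> lam (k l) * 1"
    using k l nonneg le1 by (intro mult_left_mono prod_le_1) auto
  finally show ?thesis by simp
qed

lemma nabla_S_antimono: "J \<subseteq> I \<Longrightarrow> nabla_S I d \<subseteq> nabla_S J d"
  unfolding nabla_S_def by blast

lemma relevant_indices_bounded:
  fixes lam :: "nat \<Rightarrow> real"
  assumes nonneg: "\<forall>m\<ge>1. lam m \<ge> 0" and le1: "\<forall>m\<ge>1. lam m \<le> 1"
    and to_zero: "lam \<longlonglongrightarrow> 0" and t: "t > 0"
  obtains M where "{k \<in> nabla_S J d. lam_prod lam d k > t} \<subseteq> {1..d} \<rightarrow>\<^sub>E {1..M}"
proof -
  from to_zero t have "eventually (\<lambda>m. dist (lam m) 0 < t) sequentially"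
    by (rule tendstoD)
  then obtain M where M: "\<And>m. m \<ge> M \<Longrightarrow> \<bar>lam m\<bar> < t"
    by (auto simp: eventually_sequentially)
  have "k \<in> {1..d} \<rightarrow>\<^sub>E {1..M}" if k: "k \<in> nabla_S J d" "lam_prod lam d k > t" for k
  proof -
    have kP: "k \<in> {1..d} \<rightarrow>\<^sub>E {1..}" using k by (simp add: nabla_S_def)
    have kge: "\<forall>l\<in>{1..d}. k l \<ge> 1" using kP by (auto simp: PiE_iff)
    have "k l \<le> M" if l: "l \<in> {1..d}" for l
    proof -
      have "t < lam (k l)" using k(2) lam_prod_le_factor[OF nonneg le1 kge l] by linarith
      then show "k l \<le> M" using M[of "k l"] by fastforce
    qed
    then show ?thesis using kP kge by (auto simp: PiE_iff)
  qed
  then show ?thesis by (intro that) blast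
qed

lemma finite_relevant_indices:
  fixes lam :: "nat \<Rightarrow> real"
  assumes "\<forall>m\<ge>1. lam m \<ge> 0" "\<forall>m\<ge>1. lam m \<le> 1" "lam \<longlonglongrightarrow> 0" "t > 0"
  shows "finite {k \<in> nabla_S J d. lam_prod lam d k > t}"
proof -
  obtain M where "{k \<in> nabla_S J d. lam_prod lam d k > t} \<subseteq> {1..d} \<rightarrow>\<^sub>E {1..M}"
    using relevant_indices_bounded[OF assms] .
  then show ?thesis by (rule finite_subset) (intro finite_PiE; auto)
qed

lemma card_exceeding_le:
  fixes W :: "'a \<Rightarrow> real"
  assumes "finite Z" "\<forall>z\<in>Z. W z \<ge> 0" "t > 0"
  shows "real (card {z\<in>Z. W z > t}) \<le> (\<Sum>z\<in>Z. W z) / t"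
proof -
  have "t * real (card {z\<in>Z. W z > t}) = (\<Sum>z\<in>{z\<in>Z. W z > t}. t)" by simp
  also have "\<dots> \<le> (\<Sum>z\<in>{z\<in>Z. W z > t}. W z)" by (rule sum_mono) auto
  also have "\<dots> \<le> (\<Sum>z\<in>Z. W z)" by (rule sum_mono2) (use assms in auto)
  finally show ?thesis using assms by (simp add: field_simps mult.commute)
qed

lemma mem_upclosed_iff_card:
  fixes I A :: "nat set"
  assumes fin: "finite I" and sub: "A \<subseteq> I"
    and up: "\<forall>a\<in>A. \<forall>j\<in>I. a < j \<longrightarrow> j \<in> A" and i: "i \<in> I"
  shows "i \<in> A \<longleftrightarrow> card {j\<in>I. i \<le> j} \<le> card A"
proof
  assume iA: "i \<in> A"
  have "{j\<in>I. i \<le> j} \<subseteq> A" using up iA by (auto simp: order_le_less)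
  then show "card {j\<in>I. i \<le> j} \<le> card A"
    using fin sub by (intro card_mono) (auto intro: finite_subset)
next
  assume c: "card {j\<in>I. i \<le> j} \<le> card A"
  show "i \<in> A"
  proof (rule ccontr)
    assume n: "i \<notin> A"
    have "A \<subseteq> {j\<in>I. i < j}"
    proof
      fix a assume a: "a \<in> A"
      have "\<not> a < i" "a \<noteq> i" using up a i n by blast+
      then show "a \<in> {j\<in>I. i < j}" using a sub by auto
    qed
    moreover have "{j\<in>I. i < j} \<subset> {j\<in>I. i \<le> j}" using i by auto
    ultimately have "card A < card {j\<in>I. i \<le> j}"
      using fin by (intro psubset_card_mono) auto
    with c show False by simp
  qed
qed

(* Two monotone maps on a finite index set with the same number of arguments above every
   level m coincide; this is why a symmetric multi-index is determined by its level counts. *)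
lemma monotone_eq_of_level_counts:
  fixes k k' :: "nat \<Rightarrow> nat"
  assumes fin: "finite I"
    and mk: "\<forall>i\<in>I. \<forall>j\<in>I. i<j \<longrightarrow> k i \<le> k j"
    and mk': "\<forall>i\<in>I. \<forall>j\<in>I. i<j \<longrightarrow> k' i \<le> k' j"
    and cnt: "\<And>m. m \<ge> 1 \<Longrightarrow> card {i\<in>I. m < k i} = card {i\<in>I. m < k' i}"
    and pos: "\<forall>i\<in>I. 1 \<le> k i" "\<forall>i\<in>I. 1 \<le> k' i"
  shows "\<forall>i\<in>I. k i = k' i"
proof
  fix i assume i: "i\<in>I"
  have key: "m < k i \<longleftrightarrow> m < k' i" if m: "m \<ge> 1" for m
  proof -
    have "m < k i \<longleftrightarrow> card {j\<in>I. i \<le> j} \<le> card {i\<in>I. m < k i}"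
      using mem_upclosed_iff_card[of I "{i\<in>I. m < k i}" i] fin mk i
      by (auto intro: less_le_trans)
    also have "\<dots> \<longleftrightarrow> card {j\<in>I. i \<le> j} \<le> card {i\<in>I. m < k' i}" using cnt m by simp
    also have "\<dots> \<longleftrightarrow> m < k' i"
      using mem_upclosed_iff_card[of I "{i\<in>I. m < k' i}" i] fin mk' i
      by (auto intro: less_le_trans)
    finally show ?thesis .
  qed
  show "k i = k' i" using key[of "k i"] key[of "k' i"] pos i
    by (meson linorder_neqE_nat less_irrefl)
qed

lemma card_above_eq_sum_levels:
  fixes k :: "nat \<Rightarrow> nat"
  assumes fin: "finite I" and b: "\<forall>i\<in>I. k i \<le> M"
  shows "card {i\<in>I. m < k i} = (\<Sum>m'\<in>{m+1..M}. card {i\<in>I. k i = m'})"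
proof -
  have "(\<Sum>m'\<in>{m+1..M}. \<Sum>i\<in>{i\<in>{i\<in>I. m < k i}. k i = m'}. (1::nat))
        = (\<Sum>i\<in>{i\<in>I. m < k i}. (1::nat))"
    by (rule sum.group) (use fin b in auto)
  moreover have "\<And>m'. m' \<in> {m+1..M} \<Longrightarrow> {i\<in>{i\<in>I. m < k i}. k i = m'} = {i\<in>I. k i = m'}"
    by auto
  ultimately show ?thesis by simp
qed

definition level_code :: "nat set \<Rightarrow> nat set \<Rightarrow> nat \<Rightarrow> (nat \<Rightarrow> nat) \<Rightarrow> (nat \<Rightarrow> nat) \<times> (nat \<Rightarrow> nat)" where
  "level_code I J M k = (restrict (\<lambda>m. card {i\<in>I. k i = m}) {2..M}, restrict k J)"

lemma level_code_inj:
  assumes Isub: "I \<subseteq> {1..d}" and J: "J = {1..d} - I"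
  shows "inj_on (level_code I J M) {k \<in> nabla_S I d. \<forall>l\<in>{1..d}. k l \<le> M}"
proof (rule inj_onI)
  fix k k' assume k: "k \<in> {k \<in> nabla_S I d. \<forall>l\<in>{1..d}. k l \<le> M}"
    and k': "k' \<in> {k \<in> nabla_S I d. \<forall>l\<in>{1..d}. k l \<le> M}"
    and eq: "level_code I J M k = level_code I J M k'"
  have finI: "finite I" using Isub finite_subset by blast
  have kP: "k \<in> {1..d} \<rightarrow>\<^sub>E {1..}" "k' \<in> {1..d} \<rightarrow>\<^sub>E {1..}"
    and mono: "\<forall>i\<in>I. \<forall>j\<in>I. i < j \<longrightarrow> k i \<le> k j" "\<forall>i\<in>I. \<forall>j\<in>I. i < j \<longrightarrow> k' i \<le> k' j"
    using k k' unfolding nabla_S_def by auto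
  have bI: "\<forall>i\<in>I. k i \<le> M" "\<forall>i\<in>I. k' i \<le> M" using k k' Isub by auto
  have pos: "\<forall>i\<in>I. 1 \<le> k i" "\<forall>i\<in>I. 1 \<le> k' i" using kP Isub by (auto simp: PiE_iff)
  have levels: "card {i\<in>I. k i = m} = card {i\<in>I. k' i = m}" if m: "m \<in> {2..M}" for m
    using fun_cong[OF arg_cong[OF eq, of fst], of m] m by (simp add: level_code_def)
  have onI: "\<forall>i\<in>I. k i = k' i"
  proof (rule monotone_eq_of_level_counts[OF finI mono _ pos])
    fix m :: nat assume m: "m \<ge> 1"
    have "card {i\<in>I. m < k i} = (\<Sum>m'\<in>{m+1..M}. card {i\<in>I. k i = m'})"
      by (rule card_above_eq_sum_levels[OF finI bI(1)])
    also have "\<dots> = (\<Sum>m'\<in>{m+1..M}. card {i\<in>I. k' i = m'})"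
      by (rule sum.cong) (use m levels in auto)
    also have "\<dots> = card {i\<in>I. m < k' i}"
      by (rule card_above_eq_sum_levels[OF finI bI(2), symmetric])
    finally show "card {i\<in>I. m < k i} = card {i\<in>I. m < k' i}" .
  qed
  have onJ: "\<forall>j\<in>J. k j = k' j"
    using fun_cong[OF arg_cong[OF eq, of snd]] by (simp add: level_code_def) (metis restrict_apply')
  show "k = k'"
  proof
    fix l
    show "k l = k' l"
    proof (cases "l \<in> {1..d}")
      case True
      then show ?thesis using onI onJ J by blast
    next
      case False
      then show ?thesis using PiE_arb[OF kP(1) False] PiE_arb[OF kP(2) False] by simp
    qed
  qed
qed

lemma level_code_range:
  assumes Isub: "I \<subseteq> {1..d}" and J: "J = {1..d} - I"
    and k: "k \<in> nabla_S I d" and kM: "\<forall>l\<in>{1..d}. k l \<le> M"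
  shows "level_code I J M k \<in> ({2..M} \<rightarrow>\<^sub>E {0..card I}) \<times> (J \<rightarrow>\<^sub>E {1..M})"
proof -
  have finI: "finite I" using Isub finite_subset by blast
  have "card {i\<in>I. k i = m} \<le> card I" for m by (rule card_mono[OF finI]) auto
  moreover have "k j \<in> {1..M}" if "j \<in> J" for j
    using k kM that J by (auto simp: nabla_S_def PiE_iff)
  ultimately show ?thesis by (auto simp: level_code_def)
qed

(* A product weight of k can be read off from its code, provided the weight of value 1 is 1
   (the number of symmetric coordinates equal to 1 is not recorded). *)
lemma level_code_weight:
  fixes x :: "nat \<Rightarrow> real"
  assumes Isub: "I \<subseteq> {1..d}" and J: "J = {1..d} - I" and x1: "x 1 = 1 \<or> I = {}"
    and k: "k \<in> nabla_S I d" and kM: "\<forall>l\<in>{1..d}. k l \<le> M"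
  shows "(\<Prod>l\<in>{1..d}. x (k l)) =
    (\<Prod>m\<in>{2..M}. x m ^ fst (level_code I J M k) m) * (\<Prod>j\<in>J. x (snd (level_code I J M k) j))"
proof -
  have finI: "finite I" using Isub finite_subset by blast
  have vals: "k ` I \<subseteq> {1..M}" using k kM Isub by (force simp: nabla_S_def PiE_iff)
  have one: "x 1 ^ card {i\<in>I. k i = 1} = 1" using x1 by auto
  have "(\<Prod>l\<in>{1..d}. x (k l)) = (\<Prod>i\<in>I. x (k i)) * (\<Prod>j\<in>J. x (k j))"
    using Isub J by (simp add: prod.subset_diff finI)
  also have "(\<Prod>i\<in>I. x (k i)) = (\<Prod>m\<in>{1..M}. \<Prod>i\<in>{i\<in>I. k i = m}. x (k i))"
    by (rule prod.group[symmetric]) (use finI vals in auto)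
  also have "\<dots> = (\<Prod>m\<in>{1..M}. x m ^ card {i\<in>I. k i = m})"
    by (rule prod.cong) auto
  also have "\<dots> = (\<Prod>m\<in>{2..M}. x m ^ card {i\<in>I. k i = m})"
    using one by (cases "M \<ge> 1") (simp_all add: prod.atLeast_Suc_atMost numeral_2_eq_2)
  finally show ?thesis by (simp add: level_code_def)
qed

(* The central counting bound: the number of I-symmetric multi-indices bounded by M whose
   product weight exceeds t, estimated by summing the weight over all possible codes. *)
lemma card_heavy_indices_le:
  fixes x :: "nat \<Rightarrow> real"
  assumes Isub: "I \<subseteq> {1..d}" and x1: "x 1 = 1 \<or> I = {}" and xnn: "\<forall>m. x m \<ge> 0"
    and t: "t > 0"
    and S: "S \<subseteq> {k \<in> nabla_S I d. \<forall>l\<in>{1..d}. k l \<le> M}"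
    and W: "\<forall>k\<in>S. (\<Prod>l\<in>{1..d}. x (k l)) > t"
  shows "real (card S) \<le>
    (\<Prod>m\<in>{2..M}. \<Sum>n\<in>{0..card I}. x m ^ n) * (\<Sum>m\<in>{1..M}. x m) ^ (d - card I) / t"
proof -
  define J where "J = {1..d} - I"
  define Z where "Z = ({2..M} \<rightarrow>\<^sub>E {0..card I}) \<times> (J \<rightarrow>\<^sub>E {1..M})"
  define WZ where "WZ z = (\<Prod>m\<in>{2..M}. x m ^ fst z m) * (\<Prod>j\<in>J. x (snd z j))"
    for z :: "(nat \<Rightarrow> nat) \<times> (nat \<Rightarrow> nat)"
  have finJ: "finite J" by (simp add: J_def)
  have cJ: "card J = d - card I"
    unfolding J_def using Isub by (simp add: card_Diff_subset finite_subset)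
  have finZ: "finite Z" unfolding Z_def using finJ by (intro finite_cartesian_product finite_PiE) auto
  have img: "level_code I J M ` S \<subseteq> {z\<in>Z. WZ z > t}"
    using S W level_code_range[OF Isub J_def] level_code_weight[where x=x, OF Isub J_def x1]
    by (fastforce simp: Z_def WZ_def)
  have "real (card S) = real (card (level_code I J M ` S))"
    using inj_on_subset[OF level_code_inj[OF Isub J_def] S] by (simp add: card_image)
  also have "\<dots> \<le> real (card {z\<in>Z. WZ z > t})"
    using img finZ by (intro of_nat_mono card_mono) auto
  also have "\<dots> \<le> (\<Sum>z\<in>Z. WZ z) / t"
    by (rule card_exceeding_le[OF finZ _ t]) (use xnn in \<open>auto simp: WZ_def intro!: prod_nonneg mult_nonneg_nonneg\<close>)
  also have "(\<Sum>z\<in>Z. WZ z) = (\<Sum>c\<in>{2..M} \<rightarrow>\<^sub>E {0..card I}. \<Prod>m\<in>{2..M}. x m ^ c m)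
                            * (\<Sum>h\<in>J \<rightarrow>\<^sub>E {1..M}. \<Prod>j\<in>J. x (h j))"
    unfolding Z_def WZ_def by (simp add: sum_product sum.cartesian_product case_prod_beta)
  also have "(\<Sum>c\<in>{2..M} \<rightarrow>\<^sub>E {0..card I}. \<Prod>m\<in>{2..M}. x m ^ c m)
             = (\<Prod>m\<in>{2..M}. \<Sum>n\<in>{0..card I}. x m ^ n)"
    by (rule prod_sum_PiE[symmetric]) auto
  also have "(\<Sum>h\<in>J \<rightarrow>\<^sub>E {1..M}. \<Prod>j\<in>J. x (h j)) = (\<Prod>j\<in>J. \<Sum>m\<in>{1..M}. x m)"
    by (rule prod_sum_PiE[symmetric]) (auto simp: finJ)
  also have "\<dots> = (\<Sum>m\<in>{1..M}. x m) ^ (d - card I)" by (simp add: cJ)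
  finally show ?thesis .
qed

lemma exponent_with_small_tail:
  fixes lam :: "nat \<Rightarrow> real"
  assumes nonneg: "\<forall>m\<ge>1. lam m \<ge> 0" and le1: "\<forall>m\<ge>1. lam m \<le> 1"
    and noninc: "\<forall>m\<ge>1. lam (Suc m) \<le> lam m"
    and summ: "summable (\<lambda>m. lam (Suc m) powr tau0)" and tau0: "tau0 > 0"
    and L: "lam (Suc L) < 1"
  shows "\<exists>tau A. tau > 0 \<and> (\<forall>M. (\<Sum>m\<in>{1..M}. lam m powr tau) \<le> A)
                 \<and> (\<forall>M. (\<Sum>m\<in>{Suc L..M}. lam m powr tau) \<le> 1/2)"
proof -
  define A0 where "A0 = suminf (\<lambda>m. lam (Suc m) powr tau0)"
  have hA0: "(\<Sum>m\<in>{1..M}. lam m powr tau0) \<le> A0" for M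
  proof -
    have "(\<Sum>m\<in>{1..M}. lam m powr tau0) = (\<Sum>m<M. lam (Suc m) powr tau0)"
      using sum.atLeast1_atMost_eq[of "\<lambda>m. lam m powr tau0" M] by simp
    also have "\<dots> \<le> A0" unfolding A0_def by (rule sum_le_suminf[OF summ]) auto
    finally show ?thesis .
  qed
  define \<theta> where "\<theta> = lam (Suc L)"
  have th: "0 \<le> \<theta>" "\<theta> < 1" using nonneg L by (auto simp: \<theta>_def)
  have split_exp: "lam m powr (tau0 + real n) = lam m powr tau0 * lam m ^ n" if "m \<ge> 1" for m n
  proof (cases "lam m = 0")
    case False then have "lam m > 0" using nonneg that by (simp add: order_less_le)
    then show ?thesis by (simp add: powr_add powr_realpow)
  qed simp
  have below: "lam m powr (tau0 + real n) \<le> lam m powr tau0" if "m \<ge> 1" for m n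
  proof -
    have "lam m ^ n \<le> 1" using nonneg le1 that by (simp add: power_le_one)
    then show ?thesis unfolding split_exp[OF that] by (simp add: mult_left_le)
  qed
  have tail_below: "lam m powr (tau0 + real n) \<le> lam m powr tau0 * \<theta> ^ n" if "m \<ge> Suc L" for m n
  proof -
    have m1: "m \<ge> 1" using that by simp
    have "lam m \<le> \<theta>" unfolding \<theta>_def by (rule lam_antimono[OF noninc _ that]) simp
    then have "lam m ^ n \<le> \<theta> ^ n" using nonneg m1 by (intro power_mono) auto
    then show ?thesis unfolding split_exp[OF m1] by (simp add: mult_left_mono)
  qed
  have "(\<lambda>n. \<theta> ^ n * A0) \<longlonglongrightarrow> 0"
    by (rule tendsto_mult_left_zero[OF LIMSEQ_realpow_zero[OF th]])
  then have "eventually (\<lambda>n. dist (\<theta> ^ n * A0) 0 < 1/2) sequentially" by (rule tendstoD) simp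
  then obtain n where "\<forall>n'\<ge>n. dist (\<theta> ^ n' * A0) 0 < 1/2"
    by (auto simp: eventually_sequentially)
  then have n: "\<theta> ^ n * A0 < 1/2" by (auto simp: dist_real_def)
  define tau where "tau = tau0 + real n"
  have "tau > 0" using tau0 by (simp add: tau_def)
  moreover have "(\<Sum>m\<in>{1..M}. lam m powr tau) \<le> A0" for M
    using order.trans[OF sum_mono hA0] below unfolding tau_def by auto
  moreover have "(\<Sum>m\<in>{Suc L..M}. lam m powr tau) \<le> 1/2" for M
  proof -
    have "(\<Sum>m\<in>{Suc L..M}. lam m powr tau) \<le> (\<Sum>m\<in>{Suc L..M}. lam m powr tau0) * \<theta> ^ n"
      using tail_below unfolding tau_def sum_distrib_right by (intro sum_mono) auto
    also have "\<dots> \<le> (\<Sum>m\<in>{1..M}. lam m powr tau0) * \<theta> ^ n"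
      using th by (intro mult_right_mono sum_mono2) auto
    also have "\<dots> \<le> A0 * \<theta> ^ n" using th hA0 by (intro mult_right_mono) auto
    finally show ?thesis using n by (simp add: mult.commute)
  qed
  ultimately show ?thesis by blast
qed

(* A finite geometric sum with ratio at most 1/2 is at most 1 + 2x \<le> exp (2x). *)
lemma geometric_sum_le_exp:
  fixes x :: real
  assumes "0 \<le> x" "x \<le> 1/2"
  shows "(\<Sum>n\<in>{0..a}. x ^ n) \<le> exp (2 * x)"
proof -
  have x1: "x \<noteq> 1" "1 - x > 0" using assms by auto
  have "(\<Sum>n\<in>{0..a}. x ^ n) = (\<Sum>n<Suc a. x ^ n)"
    by (simp add: atLeast0AtMost lessThan_Suc_atMost)
  also have "\<dots> = (1 - x ^ Suc a) / (1 - x)" by (subst sum_gp_strict) (simp add: x1(1))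
  also have "\<dots> \<le> 1 / (1 - x)" using x1 assms by (intro divide_right_mono) auto
  also have "\<dots> \<le> 1 + 2 * x"
  proof -
    have "(1 + 2*x) * (1-x) = 1 + x * (1 - 2*x)" by (simp add: algebra_simps)
    moreover have "0 \<le> x * (1 - 2*x)" using assms by (intro mult_nonneg_nonneg) auto
    ultimately show ?thesis using x1 by (simp add: divide_le_eq)
  qed
  also have "\<dots> \<le> exp (2 * x)" by (rule exp_ge_add_one_self)
  finally show ?thesis .
qed

(* The product over m \<ge> 2 of the geometric sums in the counting bound is polynomial in a:
   the L - 1 factors with m \<le> L contribute at most a + 1 each, the others together exp 1. *)
lemma prod_geometric_sums_le:
  fixes x :: "nat \<Rightarrow> real"
  assumes L: "L \<ge> 1" and xnn: "\<forall>m. 0 \<le> x m" and x1: "\<forall>m\<ge>1. x m \<le> 1"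
    and tail: "(\<Sum>m\<in>{Suc L..M}. x m) \<le> 1/2"
  shows "(\<Prod>m\<in>{2..M}. \<Sum>n\<in>{0..a}. x m ^ n) \<le> (real a + 1) ^ (L - 1) * exp 1"
proof -
  have small: "x m \<le> 1/2" if "m \<in> {Suc L..M}" for m
    using member_le_sum[of m "{Suc L..M}" x] that xnn tail by auto
  have short_sum: "(\<Sum>n\<in>{0..a}. x m ^ n) \<le> real a + 1" if "m \<ge> 1" for m
  proof -
    have "(\<Sum>n\<in>{0..a}. x m ^ n) \<le> (\<Sum>n\<in>{0..a}. 1)"
      using xnn x1 that by (intro sum_mono power_le_one) auto
    then show ?thesis by simp
  qed
  have "(\<Prod>m\<in>{2..M}. \<Sum>n\<in>{0..a}. x m ^ n)
        \<le> (\<Prod>m\<in>{2..M}. if m \<le> L then real a + 1 else exp (2 * x m))"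
    using xnn short_sum geometric_sum_le_exp small
    by (intro prod_mono) (auto intro: sum_nonneg)
  also have "\<dots> = (\<Prod>m\<in>{2..M} \<inter> {m. m \<le> L}. real a + 1)
                  * (\<Prod>m\<in>{2..M} \<inter> - {m. m \<le> L}. exp (2 * x m))"
    by (rule prod.If_cases) simp
  also have "\<dots> \<le> (real a + 1) ^ (L - 1) * exp 1"
  proof (rule mult_mono)
    have "card ({2..M} \<inter> {m. m \<le> L}) \<le> card {2..L}" by (intro card_mono) auto
    then show "(\<Prod>m\<in>{2..M} \<inter> {m. m \<le> L}. real a + 1) \<le> (real a + 1) ^ (L - 1)"
      by (simp add: power_increasing)
    have "{2..M} \<inter> - {m. m \<le> L} = {Suc L..M}" using L by auto
    then show "(\<Prod>m\<in>{2..M} \<inter> - {m. m \<le> L}. exp (2 * x m)) \<le> exp 1"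
      using tail by (simp add: exp_sum[symmetric] flip: sum_distrib_left)
  qed (auto intro: prod_nonneg)
  finally show ?thesis .
qed

lemma inverse_square_powr:
  fixes eps tau :: real
  assumes "eps > 0"
  shows "1 / (eps^2) powr tau = eps powr (-(2*tau))"
proof -
  have "eps^2 = eps powr 2" using powr_realpow[OF assms, of 2] by simp
  then show ?thesis by (simp add: powr_powr powr_minus_divide)
qed

lemma sqrt_powr_neg:
  assumes "u > 0"
  shows "sqrt u powr (-p) = u powr (-p/2)"
proof -
  have "sqrt u = u powr (1/2)" using assms by (simp add: powr_half_sqrt)
  then show ?thesis by (simp add: powr_powr)
qed

lemma power_powr_swap:
  fixes x r :: real
  assumes "x > 0"
  shows "(x ^ j) powr r = (x powr r) ^ j"
proof -
  have "x ^ j = x powr (real j)" using assms by (simp add: powr_realpow)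
  then show ?thesis using assms by (simp add: powr_powr powr_power mult.commute)
qed

lemma info_compl_upper:
  fixes lam :: "nat \<Rightarrow> real" and I :: "nat \<Rightarrow> nat set" and J :: "nat set"
  assumes nonneg: "\<forall>m\<ge>1. lam m \<ge> 0" and le1: "\<forall>m\<ge>1. lam m \<le> 1"
    and to_zero: "lam \<longlonglongrightarrow> 0" and tau: "tau > 0" and eps: "eps > 0"
    and Isub: "I d \<subseteq> {1..d}" and JI: "J \<subseteq> I d" and x1: "lam 1 = 1 \<or> J = {}"
  shows "\<exists>M. real (info_compl_S lam I eps d) \<le>
           (\<Prod>m\<in>{2..M}. \<Sum>n\<in>{0..card J}. (lam m powr tau) ^ n)
           * (\<Sum>m\<in>{1..M}. lam m powr tau) ^ (d - card J) / (eps^2) powr tau"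
proof -
  have e2: "eps^2 > 0" using eps by simp
  define S where "S = {k \<in> nabla_S (I d) d. lam_prod lam d k > eps\<^sup>2}"
  obtain M where M: "S \<subseteq> {1..d} \<rightarrow>\<^sub>E {1..M}"
    using relevant_indices_bounded[OF nonneg le1 to_zero e2] unfolding S_def .
  have SJ: "S \<subseteq> {k \<in> nabla_S J d. \<forall>l\<in>{1..d}. k l \<le> M}"
    using M nabla_S_antimono[OF JI] unfolding S_def by (auto simp: PiE_iff)
  have W: "\<forall>k\<in>S. (\<Prod>l\<in>{1..d}. lam (k l) powr tau) > (eps^2) powr tau"
  proof
    fix k assume k: "k \<in> S"
    have "(eps^2) powr tau < (lam_prod lam d k) powr tau"
      using k tau e2 by (intro powr_less_mono2) (auto simp: S_def)
    then show "(\<Prod>l\<in>{1..d}. lam (k l) powr tau) > (eps^2) powr tau"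
      unfolding lam_prod_def by (simp add: prod_powr_distrib)
  qed
  have "real (card S) \<le> (\<Prod>m\<in>{2..M}. \<Sum>n\<in>{0..card J}. (lam m powr tau) ^ n)
           * (\<Sum>m\<in>{1..M}. lam m powr tau) ^ (d - card J) / (eps^2) powr tau"
    by (rule card_heavy_indices_le[OF _ _ _ _ SJ W]) (use JI Isub x1 e2 in auto)
  then show ?thesis unfolding info_compl_S_def S_def by blast
qed

(* Sufficiency when lam 1 < 1: then even ignoring symmetry n(eps,d) \<le> eps^(-2 tau). *)
lemma spt_if_lam1_lt1:
  fixes lam :: "nat \<Rightarrow> real" and I :: "nat \<Rightarrow> nat set"
  assumes nonneg: "\<forall>m\<ge>1. lam m \<ge> 0" and le1: "\<forall>m\<ge>1. lam m \<le> 1"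
    and noninc: "\<forall>m\<ge>1. lam (Suc m) \<le> lam m" and to_zero: "lam \<longlonglongrightarrow> 0"
    and l1: "lam 1 < 1" and ell: "in_ell tau0 lam" and tau0: "tau0 > 0"
    and Isub: "\<forall>d\<ge>1. I d \<subseteq> {1..d}"
  shows "strongly_poly_tractable_S lam I"
proof -
  have summ: "summable (\<lambda>m. lam (Suc m) powr tau0)" using ell by (simp add: in_ell_def)
  obtain tau where tau: "tau > 0" and small: "\<forall>M. (\<Sum>m\<in>{1..M}. lam m powr tau) \<le> 1/2"
    using exponent_with_small_tail[OF nonneg le1 noninc summ tau0, of 0] l1 by auto
  show ?thesis unfolding strongly_poly_tractable_S_def
  proof (intro exI conjI allI impI)
    fix d :: nat and eps :: real assume d: "d \<ge> 1" and e: "0 < eps \<and> eps \<le> 1"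
    obtain M where M: "real (info_compl_S lam I eps d)
        \<le> (\<Sum>m\<in>{1..M}. lam m powr tau) ^ d / (eps^2) powr tau"
      using info_compl_upper[of lam tau eps I d "{}", OF nonneg le1 to_zero tau] Isub d e by auto
    have "(\<Sum>m\<in>{1..M}. lam m powr tau) ^ d \<le> 1"
      using small[rule_format, of M] by (intro power_le_one sum_nonneg) auto
    then have "real (info_compl_S lam I eps d) \<le> 1 / (eps^2) powr tau"
      using M e by (smt (verit) divide_right_mono powr_gt_zero zero_less_power)
    then show "real (info_compl_S lam I eps d) \<le> 1 * eps powr (-(2*tau))"
      using inverse_square_powr[of eps tau] e by simp
  qed (use tau in auto)
qed

lemma info_compl_upper_lam1_eq1:
  fixes lam :: "nat \<Rightarrow> real" and I :: "nat \<Rightarrow> nat set"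
  assumes nonneg: "\<forall>m\<ge>1. lam m \<ge> 0" and le1: "\<forall>m\<ge>1. lam m \<le> 1"
    and noninc: "\<forall>m\<ge>1. lam (Suc m) \<le> lam m" and to_zero: "lam \<longlonglongrightarrow> 0"
    and l1: "lam 1 = 1" and L1: "L \<ge> 1" and L: "lam (Suc L) < 1"
    and ell: "in_ell tau0 lam" and tau0: "tau0 > 0"
    and Isub: "\<forall>d\<ge>1. I d \<subseteq> {1..d}"
  shows "\<exists>tau A. tau > 0 \<and> A \<ge> 1 \<and> (\<forall>d\<ge>1. \<forall>eps>0. real (info_compl_S lam I eps d) \<le>
           (real (card (I d)) + 1)^(L-1) * exp 1 * A^(d - card (I d)) * eps powr (-(2*tau)))"
proof -
  have summ: "summable (\<lambda>m. lam (Suc m) powr tau0)" using ell by (simp add: in_ell_def)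
  obtain tau A0 where tau: "tau > 0" and sA: "\<forall>M. (\<Sum>m\<in>{1..M}. lam m powr tau) \<le> A0"
    and tail: "\<forall>M. (\<Sum>m\<in>{Suc L..M}. lam m powr tau) \<le> 1/2"
    using exponent_with_small_tail[OF nonneg le1 noninc summ tau0 L] by auto
  define A where "A = max A0 1"
  have A1: "A \<ge> 1" by (simp add: A_def)
  have "\<forall>d\<ge>1. \<forall>eps>0. real (info_compl_S lam I eps d) \<le>
          (real (card (I d)) + 1)^(L-1) * exp 1 * A^(d - card (I d)) * eps powr (-(2*tau))"
  proof (intro allI impI)
    fix d :: nat and eps :: real assume d: "d \<ge> 1" and e: "eps > 0"
    have Id: "I d \<subseteq> {1..d}" using Isub d by simp
    define a where "a = card (I d)"
    define x where "x m = lam m powr tau" for m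
    obtain M where M: "real (info_compl_S lam I eps d) \<le> (\<Prod>m\<in>{2..M}. \<Sum>n\<in>{0..a}. x m ^ n)
           * (\<Sum>m\<in>{1..M}. x m) ^ (d - a) / (eps^2) powr tau"
      using info_compl_upper[of lam tau eps I d "I d", OF nonneg le1 to_zero tau e Id] l1
      unfolding a_def x_def by blast
    have xnn: "\<forall>m. 0 \<le> x m" by (simp add: x_def)
    have x1: "\<forall>m\<ge>1. x m \<le> 1" using nonneg le1 tau unfolding x_def by (auto intro: powr_le1)
    have G: "(\<Prod>m\<in>{2..M}. \<Sum>n\<in>{0..a}. x m ^ n) \<le> (real a + 1) ^ (L - 1) * exp 1"
      by (rule prod_geometric_sums_le[OF L1 xnn x1]) (use tail in \<open>simp add: x_def\<close>)
    have Gnn: "0 \<le> (\<Prod>m\<in>{2..M}. \<Sum>n\<in>{0..a}. x m ^ n)"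
      using xnn by (intro prod_nonneg sum_nonneg zero_le_power) auto
    have S: "0 \<le> (\<Sum>m\<in>{1..M}. x m)" "(\<Sum>m\<in>{1..M}. x m) \<le> A"
      using xnn sA unfolding x_def A_def by (auto intro: sum_nonneg order.trans[OF _ max.cobounded1])
    have "(\<Prod>m\<in>{2..M}. \<Sum>n\<in>{0..a}. x m ^ n) * (\<Sum>m\<in>{1..M}. x m) ^ (d - a)
          \<le> ((real a + 1) ^ (L - 1) * exp 1) * A ^ (d - a)"
      using G Gnn S by (intro mult_mono power_mono) auto
    then have "real (info_compl_S lam I eps d)
               \<le> ((real a + 1) ^ (L - 1) * exp 1) * A ^ (d - a) / (eps^2) powr tau"
      using M e by (meson divide_right_mono powr_ge_zero order.trans)
    also have "\<dots> = (real a + 1) ^ (L - 1) * exp 1 * A ^ (d - a) * eps powr (-(2*tau))"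
      using inverse_square_powr[of eps tau] e by (simp add: field_simps)
    finally show "real (info_compl_S lam I eps d) \<le>
           (real (card (I d)) + 1)^(L-1) * exp 1 * A^(d - card (I d)) * eps powr (-(2*tau))"
      by (simp add: a_def)
  qed
  then show ?thesis using tau A1 by blast
qed

lemma spt_if_bounded_gap:
  fixes lam :: "nat \<Rightarrow> real" and I :: "nat \<Rightarrow> nat set"
  assumes nonneg: "\<forall>m\<ge>1. lam m \<ge> 0" and le1: "\<forall>m\<ge>1. lam m \<le> 1"
    and noninc: "\<forall>m\<ge>1. lam (Suc m) \<le> lam m" and to_zero: "lam \<longlonglongrightarrow> 0"
    and ell: "in_ell tau0 lam" and tau0: "tau0 > 0"
    and l1: "lam 1 = 1" and l2: "lam 2 < 1"
    and Isub: "\<forall>d\<ge>1. I d \<subseteq> {1..d}"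
    and gap: "(\<lambda>d. real (d - card (I d))) \<in> O(\<lambda>_. 1)"
  shows "strongly_poly_tractable_S lam I"
proof -
  obtain tau A where tau: "tau > 0" and A1: "A \<ge> 1" and H: "\<forall>d\<ge>1. \<forall>eps>0.
      real (info_compl_S lam I eps d) \<le>
      (real (card (I d)) + 1)^(1-1) * exp 1 * A^(d - card (I d)) * eps powr (-(2*tau))"
    using info_compl_upper_lam1_eq1[OF nonneg le1 noninc to_zero l1 _ _ ell tau0 Isub, of 1] l2
    by (auto simp: numeral_2_eq_2)
  obtain c where "eventually (\<lambda>d. norm (real (d - card (I d))) \<le> c * norm (1::real)) sequentially"
    using gap by (elim landau_o.bigE)
  then obtain N where N: "\<forall>d\<ge>N. real (d - card (I d)) \<le> c" by (auto simp: eventually_sequentially)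
  define B where "B = max (nat \<lceil>c\<rceil>) N"
  have gap_le: "d - card (I d) \<le> B" for d
  proof (cases "d \<ge> N")
    case True
    then have "real (d - card (I d)) \<le> c" using N by simp
    then have "d - card (I d) \<le> nat \<lceil>c\<rceil>" by linarith
    then show ?thesis by (simp add: B_def)
  qed (simp add: B_def)
  show ?thesis unfolding strongly_poly_tractable_S_def
  proof (intro exI conjI allI impI)
    fix d :: nat and eps :: real assume d: "d \<ge> 1" and e: "0 < eps \<and> eps \<le> 1"
    have "real (info_compl_S lam I eps d) \<le> exp 1 * A^(d - card (I d)) * eps powr (-(2*tau))"
      using H d e by auto
    also have "\<dots> \<le> exp 1 * A ^ B * eps powr (-(2*tau))"
      using A1 gap_le[of d] by (intro mult_right_mono mult_left_mono power_increasing) auto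
    finally show "real (info_compl_S lam I eps d) \<le> exp 1 * A ^ B * eps powr (-(2*tau))" .
  qed (use A1 tau in auto)
qed

lemma polynomial_growth_bound:
  fixes A c E :: real and a b d L N2 :: nat
  assumes A1: "A \<ge> 1" and c: "c > 0" and d: "d \<ge> 1" and ad: "a \<le> d"
    and b: "real b \<le> c * ln (real d) + real N2" and E: "E \<ge> 0"
  shows "(real a + 1)^(L-1) * exp 1 * A^b * E \<le>
         (2^(L-1) * exp 1 * A powr real N2) * E * real d powr (real (L-1) + c * ln A)"
proof -
  have dpos: "real d > 0" using d by simp
  have P1: "(real a + 1)^(L-1) \<le> 2^(L-1) * real d powr real (L-1)"
  proof -
    have "(real a + 1)^(L-1) \<le> (2 * real d)^(L-1)" using ad d by (intro power_mono) auto
    then show ?thesis using dpos by (simp add: power_mult_distrib powr_realpow)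
  qed
  have P2: "A^b \<le> A powr real N2 * real d powr (c * ln A)"
  proof -
    have "A^b = A powr real b" using A1 by (simp add: powr_realpow)
    also have "\<dots> \<le> A powr (c * ln (real d) + real N2)" using A1 b by (intro powr_mono) auto
    also have "\<dots> = A powr real N2 * A powr (c * ln (real d))" by (simp add: powr_add mult.commute)
    also have "A powr (c * ln (real d)) = real d powr (c * ln A)"
      using A1 dpos by (simp add: powr_def mult.commute mult.left_commute)
    finally show ?thesis .
  qed
  have "(real a + 1)^(L-1) * exp 1 * A^b * E
        \<le> (2^(L-1) * real d powr real (L-1)) * exp 1 * (A powr real N2 * real d powr (c * ln A)) * E"
    using P1 P2 E A1 by (intro mult_mono mult_nonneg_nonneg) auto
  also have "\<dots> = (2^(L-1) * exp 1 * A powr real N2) * E * real d powr (real (L-1) + c * ln A)"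
    by (simp add: powr_add algebra_simps)
  finally show ?thesis .
qed

lemma pt_if_log_gap:
  fixes lam :: "nat \<Rightarrow> real" and I :: "nat \<Rightarrow> nat set"
  assumes nonneg: "\<forall>m\<ge>1. lam m \<ge> 0" and le1: "\<forall>m\<ge>1. lam m \<le> 1"
    and noninc: "\<forall>m\<ge>1. lam (Suc m) \<le> lam m" and to_zero: "lam \<longlonglongrightarrow> 0"
    and ell: "in_ell tau0 lam" and tau0: "tau0 > 0" and l1: "lam 1 = 1"
    and Isub: "\<forall>d\<ge>1. I d \<subseteq> {1..d}"
    and gap: "(\<lambda>d. real (d - card (I d))) \<in> O(\<lambda>d. ln (real d))"
  shows "poly_tractable_S lam I"
proof -
  have "eventually (\<lambda>m. dist (lam m) 0 < 1) sequentially" using to_zero by (rule tendstoD) simp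
  then obtain L where L1: "L \<ge> 1" and L: "lam (Suc L) < 1"
    by (auto simp: eventually_sequentially dist_real_def abs_less_iff intro: le_SucI)
  obtain tau A where tau: "tau > 0" and A1: "A \<ge> 1" and H: "\<forall>d\<ge>1. \<forall>eps>0.
      real (info_compl_S lam I eps d) \<le>
      (real (card (I d)) + 1)^(L-1) * exp 1 * A^(d - card (I d)) * eps powr (-(2*tau))"
    using info_compl_upper_lam1_eq1[OF nonneg le1 noninc to_zero l1 L1 L ell tau0 Isub] by auto
  obtain c where c: "c > 0" and "eventually (\<lambda>d. norm (real (d - card (I d)))
      \<le> c * norm (ln (real d))) sequentially"
    using gap by (elim landau_o.bigE)
  then obtain N2 where N2: "\<forall>d\<ge>N2. real (d - card (I d)) \<le> c * \<bar>ln (real d)\<bar>"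
    by (auto simp: eventually_sequentially)
  have gap_le: "real (d - card (I d)) \<le> c * ln (real d) + real N2" if d: "d \<ge> 1" for d
  proof (cases "d \<ge> N2")
    case False
    have "0 \<le> c * ln (real d)" using c d by simp
    then show ?thesis using False by linarith
  qed (use N2 d in auto)
  show ?thesis unfolding poly_tractable_S_def
  proof (intro exI conjI allI impI)
    fix d :: nat and eps :: real assume d: "d \<ge> 1" and e: "0 < eps \<and> eps \<le> 1"
    have ad: "card (I d) \<le> d" using card_mono[of "{1..d}" "I d"] Isub d by auto
    have "real (info_compl_S lam I eps d) \<le>
          (real (card (I d)) + 1)^(L-1) * exp 1 * A^(d - card (I d)) * eps powr (-(2*tau))"
      using H d e by auto
    also have "\<dots> \<le> (2^(L-1) * exp 1 * A powr real N2) * eps powr (-(2*tau))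
                     * real d powr (real (L-1) + c * ln A)"
      by (rule polynomial_growth_bound[OF A1 c d ad gap_le[OF d]]) simp
    finally show "real (info_compl_S lam I eps d) \<le> (2^(L-1) * exp 1 * A powr real N2)
                    * eps powr (-(2*tau)) * real d powr (real (L-1) + c * ln A)" .
  qed (use A1 c tau in auto)
qed

(* Necessity of summability: for d = 1, n(eps,1) = #{m. lam m > eps^2}, so a bound
   K eps^(-p) gives m^2 lam m^p \<le> 2^p K^2, and hence lam \<in> l_p. *)
lemma ell_necessary:
  fixes lam :: "nat \<Rightarrow> real" and I :: "nat \<Rightarrow> nat set"
  assumes nonneg: "\<forall>m\<ge>1. lam m \<ge> 0" and le1: "\<forall>m\<ge>1. lam m \<le> 1"
    and noninc: "\<forall>m\<ge>1. lam (Suc m) \<le> lam m" and I1: "I 1 = {1}"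
    and to_zero: "lam \<longlonglongrightarrow> 0"
    and K: "\<forall>eps. 0 < eps \<and> eps \<le> 1 \<longrightarrow> real (info_compl_S lam I eps 1) \<le> K * eps powr (-p)"
  shows "in_ell p lam"
proof -
  have bound: "lam m powr p \<le> 2 powr p * K^2 / (real m)^2" if m1: "m \<ge> 1" for m
  proof (cases "lam m = 0")
    case False
    then have lp: "lam m > 0" using nonneg m1 by (simp add: order_less_le)
    define u where "u = lam m / 2"
    have u: "u > 0" "u \<le> 1" using lp le1 m1 by (auto simp: u_def)
    define eps where "eps = sqrt u"
    have eps: "eps > 0" "eps \<le> 1" "eps^2 = u" using u by (auto simp: eps_def)
    define emb where "emb j = (restrict (\<lambda>_. j) {1..1} :: nat \<Rightarrow> nat)" for j :: nat
    have sub: "emb ` {1..m} \<subseteq> {k \<in> nabla_S (I 1) 1. lam_prod lam 1 k > eps^2}"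
    proof
      fix k assume "k \<in> emb ` {1..m}"
      then obtain j where j: "j \<in> {1..m}" and k: "k = emb j" by blast
      have "lam m \<le> lam j" using j by (intro lam_antimono[OF noninc]) auto
      then show "k \<in> {k \<in> nabla_S (I 1) 1. lam_prod lam 1 k > eps^2}"
        using j eps lp unfolding k emb_def nabla_S_def I1 lam_prod_def by (auto simp: u_def)
    qed
    have inj: "inj_on emb {1..m}"
      by (rule inj_onI) (metis emb_def atLeastAtMost_singleton insertI1 restrict_apply')
    have fin: "finite {k \<in> nabla_S (I 1) 1. lam_prod lam 1 k > eps^2}"
      by (rule finite_relevant_indices[OF nonneg le1 to_zero]) (use eps(1) in simp)
    have "real m = real (card (emb ` {1..m}))" using inj by (simp add: card_image)
    also have "\<dots> \<le> real (info_compl_S lam I eps 1)"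
      unfolding info_compl_S_def using sub fin by (intro of_nat_mono card_mono) auto
    also have "\<dots> \<le> K * eps powr (-p)" using K eps by simp
    also have "\<dots> = K * u powr (-p/2)" unfolding eps_def using sqrt_powr_neg[OF u(1)] by simp
    finally have "real m * u powr (p/2) \<le> K * u powr (-p/2) * u powr (p/2)"
      using u by (intro mult_right_mono) auto
    also have "\<dots> = K" using u by (simp add: powr_add[symmetric])
    finally have "(real m * u powr (p/2))^2 \<le> K^2"
      using u m1 by (intro power_mono) auto
    moreover have "(real m * u powr (p/2))^2 = (real m)^2 * u powr p"
      using u by (simp add: power_mult_distrib powr_power)
    ultimately have h3: "(real m)^2 * u powr p \<le> K^2" by linarith
    have "u powr p = lam m powr p / 2 powr p" unfolding u_def by (simp add: powr_divide)
    with h3 m1 show ?thesis by (simp add: field_simps)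
  qed simp
  have "summable (\<lambda>n. inverse (real (Suc n) ^ 2))"
    using inverse_power_summable[of 2] by (subst summable_Suc_iff) simp
  then have "summable (\<lambda>n. 2 powr p * K^2 * inverse (real (Suc n) ^ 2))" by (rule summable_mult)
  then have "summable (\<lambda>n. lam (Suc n) powr p)"
  proof (rule summable_comparison_test[rotated], intro exI allI impI)
    fix n :: nat
    show "norm (lam (Suc n) powr p) \<le> 2 powr p * K^2 * inverse (real (Suc n) ^ 2)"
      using bound[of "Suc n"] by (simp add: divide_inverse)
  qed
  then show ?thesis by (simp add: in_ell_def)
qed

(* Lower bound: putting the value 2 on j of the free coordinates (and 1 elsewhere) gives
   (d - #I d choose j) indices of weight lam 2^j. *)
lemma info_compl_ge_choose:
  fixes lam :: "nat \<Rightarrow> real" and I :: "nat \<Rightarrow> nat set"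
  assumes nonneg: "\<forall>m\<ge>1. lam m \<ge> 0" and le1: "\<forall>m\<ge>1. lam m \<le> 1"
    and to_zero: "lam \<longlonglongrightarrow> 0" and l1: "lam 1 = 1" and l2: "lam 2 > 0"
    and Isub: "I d \<subseteq> {1..d}"
  shows "real ((d - card (I d)) choose j) \<le> real (info_compl_S lam I (sqrt (lam 2 ^ j / 2)) d)"
proof -
  define J where "J = {1..d} - I d"
  have cJ: "card J = d - card (I d)" unfolding J_def using Isub
    by (simp add: card_Diff_subset finite_subset)
  define eps where "eps = sqrt (lam 2 ^ j / 2)"
  have eps: "eps > 0" "eps^2 = lam 2 ^ j / 2" using l2 by (auto simp: eps_def)
  define ind where "ind A = ((\<lambda>i. if i \<in> {1..d} then (if i \<in> A then 2 else 1) else undefined)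
      :: nat \<Rightarrow> nat)" for A :: "nat set"
  define F where "F = {A. A \<subseteq> J \<and> card A = j}"
  have cF: "card F = card J choose j" unfolding F_def by (rule n_subsets) (simp add: J_def)
  have sub: "ind ` F \<subseteq> {k \<in> nabla_S (I d) d. lam_prod lam d k > eps^2}"
  proof
    fix k assume "k \<in> ind ` F"
    then obtain A where A: "A \<subseteq> J" "card A = j" and k: "k = ind A" by (auto simp: F_def)
    have AI: "i \<notin> A" if "i \<in> I d" for i using A that by (auto simp: J_def)
    have "k \<in> nabla_S (I d) d"
      unfolding nabla_S_def k using AI Isub by (auto simp: PiE_iff ind_def extensional_def)
    moreover have "lam_prod lam d k = lam 2 ^ j"
    proof -
      have "lam_prod lam d k = (\<Prod>l\<in>{1..d}. if l \<in> A then lam 2 else lam 1)"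
        unfolding lam_prod_def k ind_def by (rule prod.cong) auto
      also have "\<dots> = (\<Prod>l\<in>{1..d} \<inter> {l. l \<in> A}. lam 2) * (\<Prod>l\<in>{1..d} \<inter> - {l. l \<in> A}. lam 1)"
        by (rule prod.If_cases) simp
      also have "{1..d} \<inter> {l. l \<in> A} = A" using A by (auto simp: J_def)
      finally show ?thesis using l1 A by simp
    qed
    moreover have "eps^2 < lam 2 ^ j" using eps(2) zero_less_power[OF l2, of j] by linarith
    ultimately show "k \<in> {k \<in> nabla_S (I d) d. lam_prod lam d k > eps^2}" by simp
  qed
  have inj: "inj_on ind F"
  proof (rule inj_onI)
    fix A B assume A: "A \<in> F" and B: "B \<in> F" and eq: "ind A = ind B"
    have "l \<in> A \<longleftrightarrow> l \<in> B" if l: "l \<in> {1..d}" for l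
    proof -
      have "(if l \<in> A then 2 else 1) = (if l \<in> B then (2::nat) else 1)"
        using fun_cong[OF eq, of l] l unfolding ind_def by simp
      then show ?thesis by (cases "l \<in> A"; cases "l \<in> B") simp_all
    qed
    moreover have "A \<subseteq> {1..d}" "B \<subseteq> {1..d}" using A B unfolding F_def J_def by blast+
    ultimately show "A = B" by blast
  qed
  have fin: "finite {k \<in> nabla_S (I d) d. lam_prod lam d k > eps^2}"
    by (rule finite_relevant_indices[OF nonneg le1 to_zero]) (use eps(1) in simp)
  have "real ((d - card (I d)) choose j) = real (card (ind ` F))"
    using inj cF cJ by (simp add: card_image)
  also have "\<dots> \<le> real (info_compl_S lam I eps d)"
    unfolding info_compl_S_def using sub fin by (intro of_nat_mono card_mono) auto
  finally show ?thesis by (simp add: eps_def)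
qed

(* Lower bound when lam 1 = lam 2 = 1: the d + 1 monotone 1/2-valued step indices all have
   weight 1. *)
lemma info_compl_ge_succ:
  fixes lam :: "nat \<Rightarrow> real" and I :: "nat \<Rightarrow> nat set"
  assumes nonneg: "\<forall>m\<ge>1. lam m \<ge> 0" and le1: "\<forall>m\<ge>1. lam m \<le> 1"
    and to_zero: "lam \<longlonglongrightarrow> 0" and l1: "lam 1 = 1" and l2: "lam 2 = 1"
    and Isub: "I d \<subseteq> {1..d}"
  shows "real (d + 1) \<le> real (info_compl_S lam I (1/2) d)"
proof -
  define step where "step t = ((\<lambda>i. if i \<in> {1..d} then (if t < i then 2 else 1) else undefined)
      :: nat \<Rightarrow> nat)" for t :: nat
  have sub: "step ` {0..d} \<subseteq> {k \<in> nabla_S (I d) d. lam_prod lam d k > (1/2)^2}"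
  proof
    fix k assume "k \<in> step ` {0..d}"
    then obtain t where k: "k = step t" by auto
    have "k \<in> nabla_S (I d) d"
      using Isub unfolding nabla_S_def k by (auto simp: PiE_iff step_def extensional_def subset_iff)
    moreover have "lam_prod lam d k = 1"
      unfolding lam_prod_def k step_def using l1 l2 by (simp add: prod.neutral)
    ultimately show "k \<in> {k \<in> nabla_S (I d) d. lam_prod lam d k > (1/2)^2}"
      by (simp add: power2_eq_square)
  qed
  have inj: "inj_on step {0..d}"
  proof (rule inj_onI, rule ccontr)
    fix t t' assume t: "t \<in> {0..d}" "t' \<in> {0..d}" and eq: "step t = step t'" and "t \<noteq> t'"
    then consider "t < t'" | "t' < t" by linarith
    then show False
      using fun_cong[OF eq, of t'] fun_cong[OF eq, of t] t by cases (auto simp: step_def)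
  qed
  have fin: "finite {k \<in> nabla_S (I d) d. lam_prod lam d k > (1/2)^2}"
    by (rule finite_relevant_indices[OF nonneg le1 to_zero]) simp
  have "real (d + 1) = real (card (step ` {0..d}))" using inj by (simp add: card_image)
  also have "\<dots> \<le> real (info_compl_S lam I (1/2) d)"
    unfolding info_compl_S_def using sub fin by (intro of_nat_mono card_mono) auto
  finally show ?thesis .
qed

(* If (b d choose j) \<le> C1 \<beta>^j d^q for all j, then b d = O(ln d): take j \<approx> ln d and use
   (b/j)^j \<le> (b choose j). *)
lemma log_bound_of_choose_bound:
  fixes b :: "nat \<Rightarrow> nat" and C1 \<beta> q :: real
  assumes C1: "C1 \<ge> 1" and \<beta>: "\<beta> \<ge> 1" and q: "q \<ge> 0"
    and H: "\<And>d j. d \<ge> 1 \<Longrightarrow> real (b d choose j) \<le> C1 * \<beta>^j * real d powr q"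
  shows "(\<lambda>d. real (b d)) \<in> O(\<lambda>d. ln (real d))"
proof -
  define E where "E = C1 * \<beta> * exp q"
  have E1: "E \<ge> 1"
  proof -
    have "1 \<le> C1 * \<beta>" using C1 \<beta> by (metis mult_mono' mult.right_neutral order.trans zero_le_one)
    moreover have "1 \<le> exp q" using q by simp
    ultimately show ?thesis unfolding E_def by (metis mult_mono' mult.right_neutral order.trans zero_le_one)
  qed
  define N where "N = nat \<lceil>exp (1::real)\<rceil> + 1"
  have bound: "real (b d) \<le> 2 * E * ln (real d)" if dN: "d \<ge> N" for d
  proof -
    have d1: "d \<ge> 1" using dN by (simp add: N_def)
    have "real d \<ge> exp 1" using dN unfolding N_def by linarith
    then have ld: "ln (real d) \<ge> 1" using d1 by (subst ln_ge_iff) auto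
    define j where "j = nat \<lceil>ln (real d)\<rceil>"
    have j1: "real j \<ge> ln (real d)" "real j \<le> ln (real d) + 1" using ld unfolding j_def by linarith+
    have jpos: "j \<ge> 1" using j1 ld by linarith
    show ?thesis
    proof (cases "b d < j")
      case True
      then have "real (b d) \<le> 2 * ln (real d)" using j1 ld by linarith
      also have "\<dots> \<le> 2 * E * ln (real d)" using E1 ld by (simp add: mult_right_mono)
      finally show ?thesis .
    next
      case False
      have dq: "real d powr q \<le> exp q ^ j"
      proof -
        have "real d powr q = exp (q * ln (real d))" using d1 by (simp add: powr_def)
        also have "\<dots> \<le> exp (real j * q)" using q j1 by (simp add: mult_left_mono mult.commute)
        also have "\<dots> = exp q ^ j" by (rule exp_of_nat_mult)
        finally show ?thesis .
      qed
      have C1j: "C1 \<le> C1 ^ j" using C1 jpos by (metis power_increasing power_one_right)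
      have "(real (b d) / real j) ^ j \<le> real (b d choose j)"
        by (rule binomial_ge_n_over_k_pow_k) (use False in simp)
      also have "\<dots> \<le> C1 * \<beta>^j * real d powr q" by (rule H[OF d1])
      also have "\<dots> \<le> C1 * \<beta>^j * exp q ^ j" using dq C1 \<beta> by (intro mult_left_mono) auto
      also have "\<dots> \<le> C1 ^ j * \<beta>^j * exp q ^ j"
        using C1j \<beta> by (intro mult_right_mono mult_nonneg_nonneg zero_le_power) simp_all
      also have "\<dots> = E ^ j" by (simp only: E_def power_mult_distrib)
      finally have "(real (b d) / real j) ^ Suc (j - 1) \<le> E ^ Suc (j - 1)" using jpos by simp
      then have "real (b d) / real j \<le> E" by (rule power_le_imp_le_base) (use E1 in simp)
      then have "real (b d) \<le> E * real j" using jpos by (simp add: divide_le_eq)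
      also have "\<dots> \<le> E * (2 * ln (real d))" using E1 j1 ld by (intro mult_left_mono) auto
      finally show ?thesis by simp
    qed
  qed
  have "eventually (\<lambda>d. norm (real (b d)) \<le> (2 * E) * norm (ln (real d))) sequentially"
    unfolding eventually_sequentially
  proof (intro exI[of _ N] allI impI)
    fix d assume dN: "d \<ge> N"
    then have "ln (real d) \<ge> 0" by (simp add: N_def)
    then show "norm (real (b d)) \<le> (2 * E) * norm (ln (real d))" using bound[OF dN] by simp
  qed
  then show ?thesis by (rule bigoI)
qed

(* Necessity when lam 1 = 1 for strong polynomial tractability: lam 2 < 1 (otherwise n(1/2,d)
   \<ge> d + 1) and d - #I d = O(1) (j = 1 in the binomial lower bound). *)
lemma spt_necessary_lam1_eq1:
  fixes lam :: "nat \<Rightarrow> real" and I :: "nat \<Rightarrow> nat set"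
  assumes nonneg: "\<forall>m\<ge>1. lam m \<ge> 0" and le1: "\<forall>m\<ge>1. lam m \<le> 1"
    and to_zero: "lam \<longlonglongrightarrow> 0" and l1: "lam 1 = 1" and l2p: "lam 2 > 0"
    and Isub: "\<forall>d\<ge>1. I d \<subseteq> {1..d}"
    and spt: "strongly_poly_tractable_S lam I"
  shows "lam 2 < 1 \<and> (\<lambda>d. real (d - card (I d))) \<in> O(\<lambda>_. 1)"
proof -
  obtain C p where H: "\<forall>d\<ge>1. \<forall>eps. 0 < eps \<and> eps \<le> 1 \<longrightarrow>
        real (info_compl_S lam I eps d) \<le> C * eps powr (-p)"
    using spt unfolding strongly_poly_tractable_S_def by blast
  have l2le: "lam 2 \<le> 1" using le1 by simp
  have "lam 2 < 1"
  proof (rule ccontr)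
    assume "\<not> lam 2 < 1"
    then have l2: "lam 2 = 1" using l2le by simp
    define D where "D = nat \<lceil>C * (1/2) powr (-p)\<rceil> + 1"
    have "real (D + 1) \<le> real (info_compl_S lam I (1/2) D)"
      by (rule info_compl_ge_succ[OF nonneg le1 to_zero l1 l2]) (use Isub in \<open>simp add: D_def\<close>)
    also have "\<dots> \<le> C * (1/2) powr (-p)" using H by (simp add: D_def)
    also have "\<dots> < real (D + 1)" unfolding D_def by linarith
    finally show False by simp
  qed
  moreover have "(\<lambda>d. real (d - card (I d))) \<in> O(\<lambda>_. 1)"
  proof (rule bigoI)
    define eps where "eps = sqrt (lam 2 ^ 1 / 2)"
    have e: "0 < eps" "eps \<le> 1" using l2p l2le by (auto simp: eps_def)
    have "real (d - card (I d)) \<le> C * eps powr (-p)" if d: "d \<ge> 1" for d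
      using info_compl_ge_choose[OF nonneg le1 to_zero l1 l2p, of I d 1] H Isub d e
      by (fastforce simp: eps_def)
    then show "eventually (\<lambda>d. norm (real (d - card (I d))) \<le> (C * eps powr (-p)) * norm (1::real))
        sequentially"
      unfolding eventually_sequentially by (intro exI[of _ 1]) simp
  qed
  ultimately show ?thesis by blast
qed

(* Necessity when lam 1 = 1 for polynomial tractability: choosing eps^2 \<approx> lam 2^j in the
   binomial lower bound yields the hypothesis of log_bound_of_choose_bound. *)
lemma pt_necessary_lam1_eq1:
  fixes lam :: "nat \<Rightarrow> real" and I :: "nat \<Rightarrow> nat set"
  assumes nonneg: "\<forall>m\<ge>1. lam m \<ge> 0" and le1: "\<forall>m\<ge>1. lam m \<le> 1"
    and to_zero: "lam \<longlonglongrightarrow> 0" and l1: "lam 1 = 1" and l2p: "lam 2 > 0"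
    and Isub: "\<forall>d\<ge>1. I d \<subseteq> {1..d}"
    and pt: "poly_tractable_S lam I"
  shows "(\<lambda>d. real (d - card (I d))) \<in> O(\<lambda>d. ln (real d))"
proof -
  obtain C p q where p: "p > 0" and q: "q \<ge> 0" and H: "\<forall>d\<ge>1. \<forall>eps. 0 < eps \<and> eps \<le> 1 \<longrightarrow>
        real (info_compl_S lam I eps d) \<le> C * eps powr (-p) * real d powr q"
    using pt unfolding poly_tractable_S_def by blast
  have l2le: "lam 2 \<le> 1" using le1 by simp
  define \<beta> where "\<beta> = lam 2 powr (-p/2)"
  define C1 where "C1 = max 1 (C * 2 powr (p/2))"
  have \<beta>1: "\<beta> \<ge> 1"
    using powr_le1[of "p/2" "lam 2"] l2le l2p p by (simp add: \<beta>_def powr_minus_divide)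
  show ?thesis
  proof (rule log_bound_of_choose_bound[of C1 \<beta> q "\<lambda>d. d - card (I d)"])
    fix d j :: nat assume d: "d \<ge> 1"
    define eps where "eps = sqrt (lam 2 ^ j / 2)"
    have lj: "lam 2 ^ j > 0" "lam 2 ^ j \<le> 1" using l2p l2le by (auto intro: power_le_one)
    have e: "0 < eps" "eps \<le> 1" using lj by (auto simp: eps_def)
    have ep: "eps powr (-p) = \<beta> ^ j * 2 powr (p/2)"
    proof -
      have "eps powr (-p) = (lam 2 ^ j / 2) powr (-p/2)"
        unfolding eps_def using lj by (intro sqrt_powr_neg) simp
      also have "\<dots> = (lam 2 ^ j) powr (-p/2) / 2 powr (-p/2)" by (rule powr_divide)
      also have "(lam 2 ^ j) powr (-p/2) = \<beta> ^ j" unfolding \<beta>_def by (rule power_powr_swap[OF l2p])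
      also have "\<beta> ^ j / 2 powr (-p/2) = \<beta> ^ j * 2 powr (p/2)"
        by (simp add: powr_minus_divide)
      finally show ?thesis .
    qed
    have "real ((d - card (I d)) choose j) \<le> real (info_compl_S lam I eps d)"
      unfolding eps_def by (rule info_compl_ge_choose[OF nonneg le1 to_zero l1 l2p]) (use Isub d in simp)
    also have "\<dots> \<le> C * eps powr (-p) * real d powr q" using H d e by simp
    also have "\<dots> = (C * 2 powr (p/2)) * \<beta> ^ j * real d powr q" unfolding ep by (simp add: algebra_simps)
    also have "\<dots> \<le> C1 * \<beta> ^ j * real d powr q"
      using \<beta>1 by (intro mult_right_mono) (auto simp: C1_def)
    finally show "real ((d - card (I d)) choose j) \<le> C1 * \<beta> ^ j * real d powr q" .
  qed (use \<beta>1 q in \<open>auto simp: C1_def\<close>)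
qed

lemma spt_imp_pt:
  assumes "strongly_poly_tractable_S lam I"
  shows "poly_tractable_S lam I"
proof -
  obtain C p where Cp: "C > 0" "p > 0" and H: "\<forall>d\<ge>1. \<forall>eps. 0 < eps \<and> eps \<le> 1 \<longrightarrow>
      real (info_compl_S lam I eps d) \<le> C * eps powr (-p)"
    using assms unfolding strongly_poly_tractable_S_def by blast
  have bound: "\<forall>d\<ge>1. \<forall>eps. 0 < eps \<and> eps \<le> 1 \<longrightarrow>
      real (info_compl_S lam I eps d) \<le> C * eps powr (-p) * real d powr 0"
    using H by simp
  show ?thesis unfolding poly_tractable_S_def
    by (rule exI[of _ C], rule exI[of _ p], rule exI[of _ 0]) (use Cp bound in simp)
qed

(* Polynomial tractability already forces lam \<in> l_p, using only the case d = 1. *)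
lemma pt_imp_ell:
  fixes lam :: "nat \<Rightarrow> real" and I :: "nat \<Rightarrow> nat set"
  assumes nonneg: "\<forall>m\<ge>1. lam m \<ge> 0" and le1: "\<forall>m\<ge>1. lam m \<le> 1"
    and noninc: "\<forall>m\<ge>1. lam (Suc m) \<le> lam m" and I1: "I 1 = {1}"
    and to_zero: "lam \<longlonglongrightarrow> 0" and pt: "poly_tractable_S lam I"
  shows "\<exists>tau>0. in_ell tau lam"
proof -
  obtain C p q where p: "p > 0" and H: "\<forall>d\<ge>1. \<forall>eps. 0 < eps \<and> eps \<le> 1 \<longrightarrow>
        real (info_compl_S lam I eps d) \<le> C * eps powr (-p) * real d powr q"
    using pt unfolding poly_tractable_S_def by blast
  have "in_ell p lam" by (rule ell_necessary[where I=I and K=C, OF nonneg le1 noninc I1 to_zero]) (use H in auto)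
  then show ?thesis using p by blast
qed

lemma spt_characterization:
  fixes lam :: "nat \<Rightarrow> real" and I :: "nat \<Rightarrow> nat set"
  assumes nonneg: "\<forall>m\<ge>1. lam m \<ge> 0" and le1: "\<forall>m\<ge>1. lam m \<le> 1"
    and noninc: "\<forall>m\<ge>1. lam (Suc m) \<le> lam m" and to_zero: "lam \<longlonglongrightarrow> 0"
    and l2p: "lam 2 > 0" and Isub: "\<forall>d\<ge>1. I d \<subseteq> {1..d}" and I1: "I 1 = {1}"
  shows "strongly_poly_tractable_S lam I \<longleftrightarrow> (\<exists>tau>0. in_ell tau lam) \<and>
    (lam 1 < 1 \<or> (lam 1 = 1 \<and> lam 2 < 1 \<and> (\<lambda>d. real (d - card (I d))) \<in> O(\<lambda>_. 1)))"
proof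
  assume spt: "strongly_poly_tractable_S lam I"
  show "(\<exists>tau>0. in_ell tau lam) \<and>
    (lam 1 < 1 \<or> (lam 1 = 1 \<and> lam 2 < 1 \<and> (\<lambda>d. real (d - card (I d))) \<in> O(\<lambda>_. 1)))"
    using pt_imp_ell[OF nonneg le1 noninc I1 to_zero spt_imp_pt[OF spt]]
      spt_necessary_lam1_eq1[OF nonneg le1 to_zero _ l2p Isub spt] le1
    by fastforce
next
  assume "(\<exists>tau>0. in_ell tau lam) \<and>
    (lam 1 < 1 \<or> (lam 1 = 1 \<and> lam 2 < 1 \<and> (\<lambda>d. real (d - card (I d))) \<in> O(\<lambda>_. 1)))"
  then obtain tau0 where ell: "in_ell tau0 lam" "tau0 > 0"
    and "lam 1 < 1 \<or> (lam 1 = 1 \<and> lam 2 < 1 \<and> (\<lambda>d. real (d - card (I d))) \<in> O(\<lambda>_. 1))" by blast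
  then show "strongly_poly_tractable_S lam I"
    using spt_if_lam1_lt1[OF nonneg le1 noninc to_zero _ ell Isub]
      spt_if_bounded_gap[OF nonneg le1 noninc to_zero ell _ _ Isub] by blast
qed

lemma pt_characterization:
  fixes lam :: "nat \<Rightarrow> real" and I :: "nat \<Rightarrow> nat set"
  assumes nonneg: "\<forall>m\<ge>1. lam m \<ge> 0" and le1: "\<forall>m\<ge>1. lam m \<le> 1"
    and noninc: "\<forall>m\<ge>1. lam (Suc m) \<le> lam m" and to_zero: "lam \<longlonglongrightarrow> 0"
    and l2p: "lam 2 > 0" and Isub: "\<forall>d\<ge>1. I d \<subseteq> {1..d}" and I1: "I 1 = {1}"
  shows "poly_tractable_S lam I \<longleftrightarrow> (\<exists>tau>0. in_ell tau lam) \<and>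
    (lam 1 < 1 \<or> (lam 1 = 1 \<and> (\<lambda>d. real (d - card (I d))) \<in> O(\<lambda>d. ln (real d))))"
proof
  assume pt: "poly_tractable_S lam I"
  show "(\<exists>tau>0. in_ell tau lam) \<and>
    (lam 1 < 1 \<or> (lam 1 = 1 \<and> (\<lambda>d. real (d - card (I d))) \<in> O(\<lambda>d. ln (real d))))"
    using pt_imp_ell[OF nonneg le1 noninc I1 to_zero pt]
      pt_necessary_lam1_eq1[OF nonneg le1 to_zero _ l2p Isub pt] le1
    by fastforce
next
  assume "(\<exists>tau>0. in_ell tau lam) \<and>
    (lam 1 < 1 \<or> (lam 1 = 1 \<and> (\<lambda>d. real (d - card (I d))) \<in> O(\<lambda>d. ln (real d))))"
  then obtain tau0 where ell: "in_ell tau0 lam" "tau0 > 0"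
    and "lam 1 < 1 \<or> (lam 1 = 1 \<and> (\<lambda>d. real (d - card (I d))) \<in> O(\<lambda>d. ln (real d)))" by blast
  then show "poly_tractable_S lam I"
    using spt_imp_pt[OF spt_if_lam1_lt1[OF nonneg le1 noninc to_zero _ ell Isub]]
      pt_if_log_gap[OF nonneg le1 noninc to_zero ell _ Isub] by blast
qed

theorem theorem2:
  fixes lam :: "nat \<Rightarrow> real" and I :: "nat \<Rightarrow> nat set"
  assumes nonneg: "\<forall>m\<ge>1. lam m \<ge> 0"
    and noninc: "\<forall>m\<ge>1. lam (Suc m) \<le> lam m"
    and to_zero: "lam \<longlonglongrightarrow> 0"
    and lam2_pos: "lam 2 > 0"
    and lam1_le: "lam 1 \<le> 1"
    and I_sub: "\<forall>d\<ge>1. I d \<noteq> {} \<and> I d \<subseteq> {1..d}"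
    and I_1: "I 1 = {1}"
  shows "(strongly_poly_tractable_S lam I \<longleftrightarrow>
            (\<exists>tau>0. in_ell tau lam) \<and>
            (lam 1 < 1 \<or> (lam 1 = 1 \<and> lam 2 < 1 \<and>
               (\<lambda>d. real (d - card (I d))) \<in> O(\<lambda>_. 1))))
       \<and> (poly_tractable_S lam I \<longleftrightarrow>
            (\<exists>tau>0. in_ell tau lam) \<and>
            (lam 1 < 1 \<or> (lam 1 = 1 \<and>
               (\<lambda>d. real (d - card (I d))) \<in> O(\<lambda>d. ln (real d)))))"
proof -
  have le1: "\<forall>m\<ge>1. lam m \<le> 1"
    using lam_antimono[OF noninc, of 1] lam1_le by (meson order_trans order_refl)
  have Isub: "\<forall>d\<ge>1. I d \<subseteq> {1..d}" using I_sub by auto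
  show ?thesis
    using spt_characterization[OF nonneg le1 noninc to_zero lam2_pos Isub I_1]
      pt_characterization[OF nonneg le1 noninc to_zero lam2_pos Isub I_1] by blast
qed

end
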